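(* Let $\mathbb{C}$ be a small category and $N\mathbb{C}$ its nerve. Then $N\mathbb{C}$ is a Skvortsov–Shehtman complex if and only if it is a Kan complex.
   Context: A simplicial set $S$ is a Skvortsov–Shehtman complex if for all $n>1$, $0\le p<q\le n$, and any $(n-1)$-simplices $c_p,c_q$ of $S$ with $d_pc_q=d_{q-1}c_p$, there exists an $n$-simplex $x$ with $d_px=c_p$ and $d_qx=c_q$. *)

theory Defs
  imports Main
begin

text \<open>A small category: a set of objects, a set of arrows, domain, codomain,
identities and composition (Comp g f is g after f).\<close>

record ('o, 'm) category =
  Obj  :: "'o set"
  Arr  :: "'m set"
  Dom  :: "'m \<Rightarrow> 'o"
  Cod  :: "'m \<Rightarrow> 'o"
  Id   :: "'o \<Rightarrow> 'm"
  Comp :: "'m \<Rightarrow> 'm \<Rightarrow> 'm"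

definition is_category :: "('o, 'm) category \<Rightarrow> bool" where
  "is_category C \<longleftrightarrow>
     (\<forall>f\<in>Arr C. Dom C f \<in> Obj C \<and> Cod C f \<in> Obj C) \<and>
     (\<forall>a\<in>Obj C. Id C a \<in> Arr C \<and> Dom C (Id C a) = a \<and> Cod C (Id C a) = a) \<and>
     (\<forall>f\<in>Arr C. \<forall>g\<in>Arr C. Cod C f = Dom C g \<longrightarrow>
         Comp C g f \<in> Arr C \<and> Dom C (Comp C g f) = Dom C f \<and> Cod C (Comp C g f) = Cod C g) \<and>
     (\<forall>f\<in>Arr C. Comp C f (Id C (Dom C f)) = f \<and> Comp C (Id C (Cod C f)) f = f) \<and>
     (\<forall>f\<in>Arr C. \<forall>g\<in>Arr C. \<forall>h\<in>Arr C. Cod C f = Dom C g \<longrightarrow> Cod C g = Dom C h \<longrightarrow>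
         Comp C h (Comp C g f) = Comp C (Comp C h g) f)"

text \<open>A simplicial set is presented by its sets of n-simplices S n and its face
operators d i (acting on simplices of any dimension). The two properties below
only involve faces.\<close>

definition SS_complex :: "(nat \<Rightarrow> 'a set) \<Rightarrow> (nat \<Rightarrow> 'a \<Rightarrow> 'a) \<Rightarrow> bool" where
  "SS_complex S d \<longleftrightarrow>
     (\<forall>n p q. 1 < n \<and> p < q \<and> q \<le> n \<longrightarrow>
        (\<forall>cp\<in>S (n - 1). \<forall>cq\<in>S (n - 1). d p cq = d (q - 1) cp \<longrightarrow>
           (\<exists>x\<in>S n. d p x = cp \<and> d q x = cq)))"

definition Kan_complex :: "(nat \<Rightarrow> 'a set) \<Rightarrow> (nat \<Rightarrow> 'a \<Rightarrow> 'a) \<Rightarrow> bool" where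
  "Kan_complex S d \<longleftrightarrow>
     (\<forall>n k (y :: nat \<Rightarrow> 'a). 1 \<le> n \<and> k \<le> n \<and>
        (\<forall>i\<le>n. i \<noteq> k \<longrightarrow> y i \<in> S (n - 1)) \<and>
        (\<forall>i j. i < j \<and> j \<le> n \<and> i \<noteq> k \<and> j \<noteq> k \<longrightarrow> d i (y j) = d (j - 1) (y i))
        \<longrightarrow> (\<exists>x\<in>S n. \<forall>i\<le>n. i \<noteq> k \<longrightarrow> d i x = y i))"

text \<open>An n-simplex of the nerve is a string a0 -f1-> a1 -> ... -fn-> an,
represented as (a0, [f1, ..., fn]).\<close>

definition nerve_simplices :: "('o, 'm) category \<Rightarrow> nat \<Rightarrow> ('o \<times> 'm list) set" where
  "nerve_simplices C n =
     {(a, fs). a \<in> Obj C \<and> length fs = n \<and> set fs \<subseteq> Arr C \<and>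
        (\<forall>i<n. Dom C (fs ! i) = (if i = 0 then a else Cod C (fs ! (i - 1))))}"

definition nerve_face :: "('o, 'm) category \<Rightarrow> nat \<Rightarrow> ('o \<times> 'm list) \<Rightarrow> ('o \<times> 'm list)" where
  "nerve_face C i s = (case s of (a, fs) \<Rightarrow>
     if i = 0 then (if fs = [] then (a, []) else (Cod C (hd fs), tl fs))
     else if i = length fs then (a, butlast fs)
     else (a, take (i - 1) fs @ [Comp C (fs ! i) (fs ! (i - 1))] @ drop (i + 1) fs))"

end

theory Submission
  imports Defs
begin

(* Both conditions hold exactly when C is a groupoid. Each of them contains the filling of the
   outer 2-horns, and filling these horns at the arrows f and identities produces a right and a
   left inverse of every f. Conversely, in the nerve of a groupoid an n-simplex is the same as a
   cone of arrows H 0, ..., H n out of one object, with edges (H v) (H u)^-1. Two compatible faces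
   p < q determine such a cone based at a vertex outside {p, q}, which gives the
   Skvortsov-Shehtman filler. For a horn, fill two of its faces in this way: each remaining face
   then agrees with the horn, because a simplex of dimension at least 2 in the nerve of a
   groupoid is determined by any two of its faces. *)

section \<open>Outer 2-horns\<close>

definition outer_2_horn_filling :: "(nat \<Rightarrow> 'a set) \<Rightarrow> (nat \<Rightarrow> 'a \<Rightarrow> 'a) \<Rightarrow> bool" where
  "outer_2_horn_filling S d \<longleftrightarrow>
     (\<forall>c0\<in>S 1. \<forall>c1\<in>S 1. d 0 c1 = d 0 c0 \<longrightarrow> (\<exists>x\<in>S 2. d 0 x = c0 \<and> d 1 x = c1)) \<and>
     (\<forall>c1\<in>S 1. \<forall>c2\<in>S 1. d 1 c2 = d 1 c1 \<longrightarrow> (\<exists>x\<in>S 2. d 1 x = c1 \<and> d 2 x = c2))"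

lemma SS_complex_outer_2_horn_filling:
  assumes "SS_complex S d"
  shows "outer_2_horn_filling S d"
  using assms[unfolded SS_complex_def, rule_format, of 2 0 1]
    assms[unfolded SS_complex_def, rule_format, of 2 1 2]
  unfolding outer_2_horn_filling_def by simp

lemma Kan_complex_outer_2_horn_filling:
  assumes kan: "Kan_complex S d"
  shows "outer_2_horn_filling S d"
  unfolding outer_2_horn_filling_def
proof (intro conjI ballI impI)
  fix c0 c1 assume c: "c0 \<in> S 1" "c1 \<in> S 1" "d 0 c1 = d 0 c0"
  let ?y = "\<lambda>i::nat. if i = 0 then c0 else c1"
  have "\<forall>i j. i < j \<and> j \<le> 2 \<and> i \<noteq> 2 \<and> j \<noteq> 2 \<longrightarrow> d i (?y j) = d (j - 1) (?y i)"
  proof (intro allI impI)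
    fix i j :: nat assume "i < j \<and> j \<le> 2 \<and> i \<noteq> 2 \<and> j \<noteq> 2"
    then have "i = 0" "j = 1" by auto
    then show "d i (?y j) = d (j - 1) (?y i)" using c(3) by simp
  qed
  then have "\<exists>x\<in>S 2. \<forall>i\<le>2. i \<noteq> 2 \<longrightarrow> d i x = ?y i"
    using kan[unfolded Kan_complex_def, rule_format, of 2 2 ?y] c(1,2) by simp
  then obtain x where x: "x \<in> S 2" "\<forall>i\<le>2. i \<noteq> 2 \<longrightarrow> d i x = ?y i" by blast
  have "d 0 x = c0" "d 1 x = c1" using x(2)[rule_format, of 0] x(2)[rule_format, of 1] by simp_all
  then show "\<exists>x\<in>S 2. d 0 x = c0 \<and> d 1 x = c1" using x(1) by blast
next
  fix c1 c2 assume c: "c1 \<in> S 1" "c2 \<in> S 1" "d 1 c2 = d 1 c1"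
  let ?y = "\<lambda>i::nat. if i = 1 then c1 else c2"
  have "\<forall>i j. i < j \<and> j \<le> 2 \<and> i \<noteq> 0 \<and> j \<noteq> 0 \<longrightarrow> d i (?y j) = d (j - 1) (?y i)"
  proof (intro allI impI)
    fix i j :: nat assume "i < j \<and> j \<le> 2 \<and> i \<noteq> 0 \<and> j \<noteq> 0"
    then have "i = 1" "j = 2" by auto
    then show "d i (?y j) = d (j - 1) (?y i)" using c(3) by simp
  qed
  then have "\<exists>x\<in>S 2. \<forall>i\<le>2. i \<noteq> 0 \<longrightarrow> d i x = ?y i"
    using kan[unfolded Kan_complex_def, rule_format, of 2 0 ?y] c(1,2) by simp
  then obtain x where x: "x \<in> S 2" "\<forall>i\<le>2. i \<noteq> 0 \<longrightarrow> d i x = ?y i" by blast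
  have "d 1 x = c1" "d 2 x = c2" using x(2)[rule_format, of 1] x(2)[rule_format, of 2] by simp_all
  then show "\<exists>x\<in>S 2. d 1 x = c1 \<and> d 2 x = c2" using x(1) by blast
qed

section \<open>The nerve of a small category\<close>

locale small_category =
  fixes C :: "('o, 'm) category"
  assumes is_category: "is_category C"
begin

abbreviation N :: "nat \<Rightarrow> ('o \<times> 'm list) set" where "N \<equiv> nerve_simplices C"
abbreviation d :: "nat \<Rightarrow> 'o \<times> 'm list \<Rightarrow> 'o \<times> 'm list" where "d \<equiv> nerve_face C"

lemma dom_arr [simp]: "f \<in> Arr C \<Longrightarrow> Dom C f \<in> Obj C"
  and cod_arr [simp]: "f \<in> Arr C \<Longrightarrow> Cod C f \<in> Obj C"
  and id_arr [simp]: "a \<in> Obj C \<Longrightarrow> Id C a \<in> Arr C"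
  and dom_id [simp]: "a \<in> Obj C \<Longrightarrow> Dom C (Id C a) = a"
  and cod_id [simp]: "a \<in> Obj C \<Longrightarrow> Cod C (Id C a) = a"
  and comp_arr [simp]: "f \<in> Arr C \<Longrightarrow> g \<in> Arr C \<Longrightarrow> Cod C f = Dom C g \<Longrightarrow> Comp C g f \<in> Arr C"
  and dom_comp [simp]: "f \<in> Arr C \<Longrightarrow> g \<in> Arr C \<Longrightarrow> Cod C f = Dom C g \<Longrightarrow> Dom C (Comp C g f) = Dom C f"
  and cod_comp [simp]: "f \<in> Arr C \<Longrightarrow> g \<in> Arr C \<Longrightarrow> Cod C f = Dom C g \<Longrightarrow> Cod C (Comp C g f) = Cod C g"
  and comp_assoc: "f \<in> Arr C \<Longrightarrow> g \<in> Arr C \<Longrightarrow> h \<in> Arr C \<Longrightarrow> Cod C f = Dom C g \<Longrightarrow>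
      Cod C g = Dom C h \<Longrightarrow> Comp C h (Comp C g f) = Comp C (Comp C h g) f"
  using is_category unfolding is_category_def by blast+

lemma comp_id_right [simp]: "f \<in> Arr C \<Longrightarrow> a = Dom C f \<Longrightarrow> Comp C f (Id C a) = f"
  and comp_id_left [simp]: "f \<in> Arr C \<Longrightarrow> a = Cod C f \<Longrightarrow> Comp C (Id C a) f = f"
  using is_category unfolding is_category_def by blast+

definition vertex :: "'o \<times> 'm list \<Rightarrow> nat \<Rightarrow> 'o" where
  "vertex x u = (if u = 0 then fst x else Cod C (snd x ! (u - 1)))"

primrec edge :: "'o \<times> 'm list \<Rightarrow> nat \<Rightarrow> nat \<Rightarrow> 'm" where
  "edge x u 0 = Id C (vertex x u)"
| "edge x u (Suc v) = (if u \<le> v then Comp C (snd x ! v) (edge x u v) else Id C (vertex x u))"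

lemma nerve_simplices_iff:
  "(a, fs) \<in> N n \<longleftrightarrow> a \<in> Obj C \<and> length fs = n \<and>
     (\<forall>j<n. fs ! j \<in> Arr C \<and> Dom C (fs ! j) = vertex (a, fs) j)"
  unfolding nerve_simplices_def vertex_def by (auto simp: subset_code(1) all_set_conv_all_nth)

lemma length_simplex: "x \<in> N n \<Longrightarrow> length (snd x) = n"
  using nerve_simplices_iff[of "fst x" "snd x" n] by simp

lemma spine_arr:
  assumes "x \<in> N n" and "j < n"
  shows "snd x ! j \<in> Arr C \<and> Dom C (snd x ! j) = vertex x j \<and> Cod C (snd x ! j) = vertex x (Suc j)"
  using assms nerve_simplices_iff[of "fst x" "snd x" n] by (simp add: vertex_def)

lemma vertex_obj:
  assumes "x \<in> N n" and "u \<le> n"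
  shows "vertex x u \<in> Obj C"
proof (cases u)
  case 0
  then show ?thesis using assms nerve_simplices_iff[of "fst x" "snd x" n] by (simp add: vertex_def)
next
  case (Suc j)
  then show ?thesis using assms spine_arr[of x n j] by (metis Suc_le_lessD cod_arr)
qed

lemma edge_refl: "edge x u u = Id C (vertex x u)"
  by (cases u) simp_all

lemma edge_arr:
  assumes "x \<in> N n" and "u \<le> v" and "v \<le> n"
  shows "edge x u v \<in> Arr C \<and> Dom C (edge x u v) = vertex x u \<and> Cod C (edge x u v) = vertex x v"
  using assms(2,3)
proof (induction v)
  case 0
  then show ?case using vertex_obj[OF assms(1)] by simp
next
  case (Suc v)
  show ?case
  proof (cases "u \<le> v")
    case True
    then show ?thesis using Suc spine_arr[OF assms(1), of v] by simp
  next
    case False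
    then show ?thesis using Suc vertex_obj[OF assms(1)] by (simp add: le_Suc_eq)
  qed
qed

lemma edge_step:
  assumes "x \<in> N n" and "j < n"
  shows "edge x j (Suc j) = snd x ! j"
  using assms spine_arr[OF assms] by (simp add: edge_refl)

lemma edge_trans:
  assumes x: "x \<in> N n" and "u \<le> v" "v \<le> w" "w \<le> n"
  shows "edge x u w = Comp C (edge x v w) (edge x u v)"
  using assms(2-4)
proof (induction w)
  case 0
  then show ?case using edge_arr[OF x, of 0 0] by simp
next
  case (Suc w)
  show ?case
  proof (cases "v \<le> w")
    case True
    have "edge x u (Suc w) = Comp C (snd x ! w) (Comp C (edge x v w) (edge x u v))"
      using Suc True by simp
    also have "\<dots> = Comp C (Comp C (snd x ! w) (edge x v w)) (edge x u v)"
      using Suc True spine_arr[OF x, of w] edge_arr[OF x, of u v] edge_arr[OF x, of v w]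
      by (intro comp_assoc) auto
    also have "\<dots> = Comp C (edge x v (Suc w)) (edge x u v)"
      using True by simp
    finally show ?thesis .
  next
    case False
    then have "v = Suc w" using Suc by simp
    then show ?thesis using Suc edge_arr[OF x, of u v] by (simp only: edge_refl comp_id_left)
  qed
qed

lemma nerve_simplex_eqI:
  assumes x: "x \<in> N n" and y: "y \<in> N n" and "vertex x 0 = vertex y 0"
    and edges: "\<And>j. j < n \<Longrightarrow> edge x j (Suc j) = edge y j (Suc j)"
  shows "x = y"
proof (rule prod_eqI)
  show "fst x = fst y" using assms(3) by (simp add: vertex_def)
  show "snd x = snd y"
    using length_simplex[OF x] length_simplex[OF y] edges edge_step[OF x] edge_step[OF y]
    by (intro nth_equalityI) auto
qed

(* An n-simplex is a functor from the ordinal [n] to C: F on objects, G u v on the arrow u <= v. *)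
definition simplex_of :: "(nat \<Rightarrow> 'o) \<Rightarrow> (nat \<Rightarrow> nat \<Rightarrow> 'm) \<Rightarrow> nat \<Rightarrow> 'o \<times> 'm list" where
  "simplex_of F G n = (F 0, map (\<lambda>j. G j (Suc j)) [0..<n])"

context
  fixes F :: "nat \<Rightarrow> 'o" and G :: "nat \<Rightarrow> nat \<Rightarrow> 'm" and n :: nat
  assumes functor_arr: "\<And>u v. u \<le> v \<Longrightarrow> v \<le> n \<Longrightarrow>
      G u v \<in> Arr C \<and> Dom C (G u v) = F u \<and> Cod C (G u v) = F v"
    and functor_id: "\<And>u. u \<le> n \<Longrightarrow> G u u = Id C (F u)"
    and functor_comp: "\<And>u v w. u \<le> v \<Longrightarrow> v \<le> w \<Longrightarrow> w \<le> n \<Longrightarrow> Comp C (G v w) (G u v) = G u w"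
begin

lemma vertex_simplex_of: "u \<le> n \<Longrightarrow> vertex (simplex_of F G n) u = F u"
  using functor_arr[of "u - 1" u] by (auto simp: vertex_def simplex_of_def)

lemma simplex_of_in_nerve: "simplex_of F G n \<in> N n"
proof -
  have "F 0 \<in> Obj C" using functor_arr[of 0 0] dom_arr by fastforce
  moreover have "G j (Suc j) \<in> Arr C \<and> Dom C (G j (Suc j)) = vertex (simplex_of F G n) j" if "j < n" for j
    using that functor_arr[of j "Suc j"] vertex_simplex_of[of j] by simp
  ultimately show ?thesis by (simp add: simplex_of_def nerve_simplices_iff)
qed

lemma edge_simplex_of: "u \<le> v \<Longrightarrow> v \<le> n \<Longrightarrow> edge (simplex_of F G n) u v = G u v"
proof (induction v)
  case 0
  then show ?case using vertex_simplex_of[of 0] functor_id[of 0] by simp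
next
  case (Suc v)
  show ?case
  proof (cases "u \<le> v")
    case True
    then show ?thesis using Suc functor_comp[of u v "Suc v"] by (simp add: simplex_of_def)
  next
    case False
    then show ?thesis using Suc vertex_simplex_of[of u] functor_id[of u] by (simp add: le_Suc_eq)
  qed
qed

end

definition coface :: "nat \<Rightarrow> nat \<Rightarrow> nat" where
  "coface i u = (if u < i then u else Suc u)"

definition coface_inv :: "nat \<Rightarrow> nat \<Rightarrow> nat" where
  "coface_inv i v = (if v < i then v else v - 1)"

lemma coface_mono: "u \<le> v \<Longrightarrow> coface i u \<le> coface i v"
  and coface_le: "u \<le> n - 1 \<Longrightarrow> 1 \<le> n \<Longrightarrow> coface i u \<le> n"
  and coface_neq [simp]: "coface i u \<noteq> i"
  and coface_inv_coface [simp]: "coface_inv i (coface i u) = u"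
  and coface_coface_inv: "v \<noteq> i \<Longrightarrow> coface i (coface_inv i v) = v"
  and coface_inv_le: "v \<le> n \<Longrightarrow> v \<noteq> i \<Longrightarrow> i \<le> n \<Longrightarrow> coface_inv i v \<le> n - 1"
  by (auto simp: coface_def coface_inv_def)

lemma inner_face_nth:
  assumes x: "x \<in> N n" and i: "0 < i" "i < n" and j: "j < n - 1"
  shows "snd (d i x) ! j = edge x (coface i j) (coface i (Suc j))"
proof -
  obtain a fs where x_eq: "x = (a, fs)" by (cases x)
  have len: "length fs = n" using length_simplex[OF x] x_eq by simp
  have step: "\<And>j. j < n \<Longrightarrow> fs ! j = edge x j (Suc j)" using edge_step[OF x] x_eq by simp
  have dx: "snd (d i x) = take (i - 1) fs @ [Comp C (fs ! i) (fs ! (i - 1))] @ drop (i + 1) fs"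
    using x_eq len i by (simp add: nerve_face_def)
  consider "j < i - 1" | "j = i - 1" | "i \<le> j" by linarith
  then show ?thesis
  proof cases
    case 1
    then have "Suc j < i" "j < n" using i by linarith+
    then show ?thesis using 1 dx len step[of j] by (simp add: nth_append coface_def del: edge.simps)
  next
    case 2
    have "Comp C (fs ! i) (fs ! (i - 1)) = edge x (i - 1) (Suc i)"
      using edge_trans[OF x, of "i - 1" i "Suc i"] step[of i] step[of "i - 1"] i by simp
    then show ?thesis using 2 dx i len by (simp add: nth_append coface_def del: edge.simps)
  next
    case 3
    then have "Suc i + (j - (i - 1) - 1) = Suc j" "Suc j < n" "\<not> j < i - 1" using i j by linarith+
    then show ?thesis using 3 dx i len step[of "Suc j"] by (simp add: nth_append coface_def del: edge.simps)
  qed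
qed

lemma nerve_face_eq:
  assumes x: "x \<in> N n" and n: "1 \<le> n" and i: "i \<le> n"
  shows "d i x = simplex_of (\<lambda>u. vertex x (coface i u)) (\<lambda>u v. edge x (coface i u) (coface i v)) (n - 1)"
proof -
  obtain a fs where x_eq: "x = (a, fs)" by (cases x)
  have len: "length fs = n" using length_simplex[OF x] x_eq by simp
  have step: "\<And>j. j < n \<Longrightarrow> fs ! j = edge x j (Suc j)" using edge_step[OF x] x_eq by simp
  consider (first) "i = 0" | (last) "i = n" "i \<noteq> 0" | (inner) "0 < i" "i < n" using i by linarith
  then have "fst (d i x) = vertex x (coface i 0) \<and> length (snd (d i x)) = n - 1 \<and>
    (\<forall>j < n - 1. snd (d i x) ! j = edge x (coface i j) (coface i (Suc j)))"
  proof cases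
    case first
    have "fs \<noteq> []" using len n by auto
    then have "d i x = (Cod C (fs ! 0), tl fs)"
      using first x_eq by (simp add: nerve_face_def hd_conv_nth)
    then show ?thesis using first len step
      by (simp add: vertex_def coface_def x_eq nth_tl del: edge.simps)
  next
    case last
    then have "d i x = (a, butlast fs)" using x_eq len by (simp add: nerve_face_def)
    then show ?thesis using last len step
      by (auto simp: vertex_def coface_def x_eq nth_butlast simp del: edge.simps)
  next
    case inner
    then show ?thesis using inner_face_nth[OF x] x_eq len by (simp add: nerve_face_def vertex_def coface_def)
  qed
  then show ?thesis by (auto simp: simplex_of_def intro!: prod_eqI nth_equalityI)
qed

context
  fixes x n i
  assumes x: "x \<in> N n" and n: "1 \<le> n" and i: "i \<le> n"
begin

lemma face_functor_arr:
  "u \<le> v \<Longrightarrow> v \<le> n - 1 \<Longrightarrow> edge x (coface i u) (coface i v) \<in> Arr C \<and>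
     Dom C (edge x (coface i u) (coface i v)) = vertex x (coface i u) \<and>
     Cod C (edge x (coface i u) (coface i v)) = vertex x (coface i v)"
  using edge_arr[OF x] coface_mono coface_le n by simp

lemma face_functor_comp:
  "u \<le> v \<Longrightarrow> v \<le> w \<Longrightarrow> w \<le> n - 1 \<Longrightarrow>
     Comp C (edge x (coface i v) (coface i w)) (edge x (coface i u) (coface i v)) =
     edge x (coface i u) (coface i w)"
  using edge_trans[OF x, of "coface i u" "coface i v" "coface i w"] coface_mono coface_le n by simp

lemma face_in_nerve: "d i x \<in> N (n - 1)"
  using simplex_of_in_nerve[OF face_functor_arr edge_refl face_functor_comp] nerve_face_eq[OF x n i] by simp

lemma vertex_face: "u \<le> n - 1 \<Longrightarrow> vertex (d i x) u = vertex x (coface i u)"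
  using vertex_simplex_of[OF face_functor_arr edge_refl face_functor_comp] nerve_face_eq[OF x n i] by simp

lemma edge_face: "u \<le> v \<Longrightarrow> v \<le> n - 1 \<Longrightarrow> edge (d i x) u v = edge x (coface i u) (coface i v)"
  using edge_simplex_of[OF face_functor_arr edge_refl face_functor_comp] nerve_face_eq[OF x n i] by simp

end

lemma face_face:
  assumes x: "x \<in> N n" and n: "2 \<le> n" and ij: "i < j" "j \<le> n"
  shows "d i (d j x) = d (j - 1) (d i x)"
proof -
  have dj: "d j x \<in> N (n - 1)" and di: "d i x \<in> N (n - 1)"
    using face_in_nerve[OF x] ij n by simp_all
  have cofaces: "coface j (coface i t) = coface i (coface (j - 1) t)" for t
    using ij by (auto simp: coface_def)
  show ?thesis
  proof (rule nerve_simplex_eqI)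
    show "d i (d j x) \<in> N (n - 1 - 1)" "d (j - 1) (d i x) \<in> N (n - 1 - 1)"
      using face_in_nerve[OF dj] face_in_nerve[OF di] ij n by simp_all
    show "vertex (d i (d j x)) 0 = vertex (d (j - 1) (d i x)) 0"
      using vertex_face[OF dj, of i 0] vertex_face[OF di, of "j - 1" 0] vertex_face[OF x, of j]
        vertex_face[OF x, of i] cofaces[of 0] coface_le[of 0 "n - 1"] ij n
      by simp
    fix t assume t: "t < n - 1 - 1"
    have "coface i t \<le> coface i (Suc t)" "coface i (Suc t) \<le> n - 1"
      "coface (j - 1) t \<le> coface (j - 1) (Suc t)" "coface (j - 1) (Suc t) \<le> n - 1"
      using t n ij by (auto simp: coface_def)
    then show "edge (d i (d j x)) t (Suc t) = edge (d (j - 1) (d i x)) t (Suc t)"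
      using edge_face[OF dj, of i t "Suc t"] edge_face[OF di, of "j - 1" t "Suc t"]
        edge_face[OF x, of j "coface i t" "coface i (Suc t)"]
        edge_face[OF x, of i "coface (j - 1) t" "coface (j - 1) (Suc t)"] t n ij cofaces
      by simp
  qed
qed

lemma arrow_in_nerve: "f \<in> Arr C \<Longrightarrow> (Dom C f, [f]) \<in> N 1"
  by (simp add: nerve_simplices_iff vertex_def)

lemma nerve_2_simplexE:
  assumes "x \<in> N 2"
  obtains g h where "x = (Dom C g, [g, h])" "g \<in> Arr C" "h \<in> Arr C" "Dom C h = Cod C g"
proof -
  obtain a fs where x_eq: "x = (a, fs)" by (cases x)
  with assms obtain g h where "fs = [g, h]"
    using length_simplex[OF assms] by (auto simp: numeral_2_eq_2 length_Suc_conv)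
  with assms x_eq show thesis
    using that by (auto simp: nerve_simplices_iff vertex_def less_2_cases_iff)
qed

lemma Kan_filler_dim_1:
  assumes k: "k \<le> 1" and y: "\<forall>i\<le>1. i \<noteq> k \<longrightarrow> y i \<in> N (1 - 1)"
  shows "\<exists>x\<in>N 1. \<forall>i\<le>1. i \<noteq> k \<longrightarrow> d i x = y i"
proof -
  define j where "j = 1 - k"
  have j: "j \<le> 1" "j \<noteq> k" using k by (auto simp: j_def le_Suc_eq)
  have other: "i = j" if "i \<le> 1" "i \<noteq> k" for i using that k by (auto simp: j_def)
  obtain a where a: "y j = (a, [])" "a \<in> Obj C"
    using y[rule_format, OF j] by (cases "y j") (auto simp: nerve_simplices_iff)
  have "d i (a, [Id C a]) = y j" if "i \<le> 1" for i
    using that a by (auto simp: nerve_face_def le_Suc_eq)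
  moreover have "(a, [Id C a]) \<in> N 1" using arrow_in_nerve[of "Id C a"] a by simp
  ultimately show ?thesis using other by (intro bexI[of _ "(a, [Id C a])"]) auto
qed

context
  assumes fillers: "outer_2_horn_filling N d"
begin

lemma outer_2_horn_filling_right_inverse:
  assumes f: "f \<in> Arr C"
  obtains g where "g \<in> Arr C" "Dom C g = Cod C f" "Cod C g = Dom C f" "Comp C f g = Id C (Cod C f)"
proof -
  have "d 0 (Cod C f, [Id C (Cod C f)]) = d 0 (Dom C f, [f])"
    using f by (simp add: nerve_face_def)
  then obtain x where x: "x \<in> N 2" "d 0 x = (Dom C f, [f])" "d 1 x = (Cod C f, [Id C (Cod C f)])"
    using fillers arrow_in_nerve[OF f] arrow_in_nerve[of "Id C (Cod C f)"] f
    unfolding outer_2_horn_filling_def by force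
  obtain g h where "x = (Dom C g, [g, h])" "g \<in> Arr C" "h \<in> Arr C" "Dom C h = Cod C g"
    using nerve_2_simplexE[OF x(1)] by blast
  with x(2,3) show thesis using that by (simp add: nerve_face_def)
qed

lemma outer_2_horn_filling_left_inverse:
  assumes f: "f \<in> Arr C"
  obtains h where "h \<in> Arr C" "Dom C h = Cod C f" "Comp C h f = Id C (Dom C f)"
proof -
  have "d 1 (Dom C f, [f]) = d 1 (Dom C f, [Id C (Dom C f)])"
    using f by (simp add: nerve_face_def)
  then obtain x where x: "x \<in> N 2" "d 1 x = (Dom C f, [Id C (Dom C f)])" "d 2 x = (Dom C f, [f])"
    using fillers arrow_in_nerve[OF f] arrow_in_nerve[of "Id C (Dom C f)"] f
    unfolding outer_2_horn_filling_def by force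
  obtain g h where "x = (Dom C g, [g, h])" "g \<in> Arr C" "h \<in> Arr C" "Dom C h = Cod C g"
    using nerve_2_simplexE[OF x(1)] by blast
  with x(2,3) show thesis using that by (simp add: nerve_face_def)
qed

lemma outer_2_horn_filling_inverse:
  assumes f: "f \<in> Arr C"
  shows "\<exists>g\<in>Arr C. Dom C g = Cod C f \<and> Cod C g = Dom C f \<and>
     Comp C g f = Id C (Dom C f) \<and> Comp C f g = Id C (Cod C f)"
proof -
  obtain g where g: "g \<in> Arr C" "Dom C g = Cod C f" "Cod C g = Dom C f" "Comp C f g = Id C (Cod C f)"
    using outer_2_horn_filling_right_inverse[OF f] .
  obtain h where h: "h \<in> Arr C" "Dom C h = Cod C f" "Comp C h f = Id C (Dom C f)"
    using outer_2_horn_filling_left_inverse[OF f] .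
  have "h = Comp C h (Comp C f g)" using g h by simp
  also have "\<dots> = Comp C (Comp C h f) g" using f g h by (intro comp_assoc) auto
  also have "\<dots> = g" using g h by simp
  finally show ?thesis using g h by blast
qed

end

end

section \<open>The nerve of a groupoid\<close>

locale groupoid = small_category C for C :: "('o, 'm) category" +
  assumes invertible: "f \<in> Arr C \<Longrightarrow> \<exists>g\<in>Arr C. Dom C g = Cod C f \<and> Cod C g = Dom C f \<and>
     Comp C g f = Id C (Dom C f) \<and> Comp C f g = Id C (Cod C f)"

lemma (in small_category) outer_2_horn_filling_groupoid:
  "outer_2_horn_filling N d \<Longrightarrow> groupoid C"
  using is_category outer_2_horn_filling_inverse
  by (intro groupoid.intro small_category.intro groupoid_axioms.intro)

context groupoid
begin

definition arr_inv :: "'m \<Rightarrow> 'm" where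
  "arr_inv f = (SOME g. g \<in> Arr C \<and> Dom C g = Cod C f \<and> Cod C g = Dom C f \<and>
     Comp C g f = Id C (Dom C f) \<and> Comp C f g = Id C (Cod C f))"

lemma arr_inv:
  assumes "f \<in> Arr C"
  shows arr_inv_arr [simp]: "arr_inv f \<in> Arr C"
    and dom_arr_inv [simp]: "Dom C (arr_inv f) = Cod C f"
    and cod_arr_inv [simp]: "Cod C (arr_inv f) = Dom C f"
    and comp_arr_inv_arr [simp]: "Comp C (arr_inv f) f = Id C (Dom C f)"
    and comp_arr_arr_inv [simp]: "Comp C f (arr_inv f) = Id C (Cod C f)"
  using someI_ex[OF invertible[OF assms, unfolded Bex_def]] by (simp_all add: arr_inv_def)

definition arr_div :: "'m \<Rightarrow> 'm \<Rightarrow> 'm" where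
  "arr_div h g = Comp C h (arr_inv g)"

context
  fixes g h :: 'm
  assumes g: "g \<in> Arr C" and h: "h \<in> Arr C" and dom_eq: "Dom C h = Dom C g"
begin

lemma arr_div_arr [simp]: "arr_div h g \<in> Arr C"
  and dom_arr_div [simp]: "Dom C (arr_div h g) = Cod C g"
  and cod_arr_div [simp]: "Cod C (arr_div h g) = Cod C h"
  using g h dom_eq by (simp_all add: arr_div_def)

lemma comp_arr_div_cancel: "Comp C (arr_div h g) g = h"
proof -
  have "Comp C (arr_div h g) g = Comp C h (Comp C (arr_inv g) g)"
    unfolding arr_div_def using g h dom_eq by (intro comp_assoc[symmetric]) auto
  then show ?thesis using g h dom_eq by simp
qed

end

lemma arr_div_self: "g \<in> Arr C \<Longrightarrow> arr_div g g = Id C (Cod C g)"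
  by (simp add: arr_div_def)

lemma arr_div_comp_cancel:
  assumes "f \<in> Arr C" "g \<in> Arr C" "Cod C f = Dom C g"
  shows "arr_div (Comp C g f) f = g"
proof -
  have "arr_div (Comp C g f) f = Comp C g (Comp C f (arr_inv f))"
    unfolding arr_div_def using assms by (intro comp_assoc[symmetric]) auto
  then show ?thesis using assms by simp
qed

lemma comp_arr_div:
  assumes "f \<in> Arr C" "g \<in> Arr C" "h \<in> Arr C" "Dom C g = Dom C f" "Dom C h = Dom C f"
  shows "Comp C (arr_div h g) (arr_div g f) = arr_div h f"
proof -
  have "Comp C (arr_div h g) (arr_div g f) = Comp C (Comp C (arr_div h g) g) (arr_inv f)"
    unfolding arr_div_def[of g f] using assms by (intro comp_assoc) auto
  then show ?thesis using assms comp_arr_div_cancel by (simp add: arr_div_def[of h f])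
qed


definition vertex_arrow :: "'o \<times> 'm list \<Rightarrow> nat \<Rightarrow> nat \<Rightarrow> 'm" where
  "vertex_arrow x u v = arr_div (edge x 0 v) (edge x 0 u)"

context
  fixes x m
  assumes x: "x \<in> N m"
begin

lemma vertex_arrow_arr:
  "u \<le> m \<Longrightarrow> v \<le> m \<Longrightarrow> vertex_arrow x u v \<in> Arr C \<and>
     Dom C (vertex_arrow x u v) = vertex x u \<and> Cod C (vertex_arrow x u v) = vertex x v"
  using edge_arr[OF x, of 0 u] edge_arr[OF x, of 0 v] by (simp add: vertex_arrow_def)

lemma comp_vertex_arrow:
  "u \<le> m \<Longrightarrow> v \<le> m \<Longrightarrow> w \<le> m \<Longrightarrow>
     Comp C (vertex_arrow x v w) (vertex_arrow x u v) = vertex_arrow x u w"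
  using edge_arr[OF x, of 0 u] edge_arr[OF x, of 0 v] edge_arr[OF x, of 0 w]
  by (simp add: vertex_arrow_def comp_arr_div)

lemma vertex_arrow_edge: "u \<le> v \<Longrightarrow> v \<le> m \<Longrightarrow> vertex_arrow x u v = edge x u v"
  using edge_trans[OF x, of 0 u v] edge_arr[OF x, of 0 u] edge_arr[OF x, of u v]
  by (simp add: vertex_arrow_def arr_div_comp_cancel)

lemma arr_div_vertex_arrow:
  assumes "r \<le> m" "u \<le> m" "v \<le> m"
  shows "arr_div (vertex_arrow x r v) (vertex_arrow x r u) = vertex_arrow x u v"
  using comp_vertex_arrow[of r u v] vertex_arrow_arr[of r u] vertex_arrow_arr[of u v] assms
  by (metis arr_div_comp_cancel)

end

lemma vertex_arrow_face:
  assumes x: "x \<in> N n" and n: "1 \<le> n" and i: "i \<le> n" and uv: "u \<le> n - 1" "v \<le> n - 1"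
  shows "vertex_arrow (d i x) u v = vertex_arrow x (coface i u) (coface i v)"
proof -
  have "vertex_arrow (d i x) u v = arr_div (edge x (coface i 0) (coface i v)) (edge x (coface i 0) (coface i u))"
    using edge_face[OF x n i] uv by (simp add: vertex_arrow_def)
  also have "\<dots> = arr_div (vertex_arrow x (coface i 0) (coface i v)) (vertex_arrow x (coface i 0) (coface i u))"
    using vertex_arrow_edge[OF x] coface_mono[of 0] coface_le n uv by simp
  also have "\<dots> = vertex_arrow x (coface i u) (coface i v)"
    using arr_div_vertex_arrow[OF x] coface_le n uv by simp
  finally show ?thesis .
qed

definition cone_simplex :: "(nat \<Rightarrow> 'm) \<Rightarrow> nat \<Rightarrow> 'o \<times> 'm list" where
  "cone_simplex H n = simplex_of (\<lambda>u. Cod C (H u)) (\<lambda>u v. arr_div (H v) (H u)) n"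

context
  fixes H :: "nat \<Rightarrow> 'm" and n :: nat and c :: 'o
  assumes cone: "\<And>v. v \<le> n \<Longrightarrow> H v \<in> Arr C \<and> Dom C (H v) = c"
begin

lemma cone_functor:
  shows "\<And>u v. u \<le> v \<Longrightarrow> v \<le> n \<Longrightarrow> arr_div (H v) (H u) \<in> Arr C \<and>
      Dom C (arr_div (H v) (H u)) = Cod C (H u) \<and> Cod C (arr_div (H v) (H u)) = Cod C (H v)"
    and "\<And>u. u \<le> n \<Longrightarrow> arr_div (H u) (H u) = Id C (Cod C (H u))"
    and "\<And>u v w. u \<le> v \<Longrightarrow> v \<le> w \<Longrightarrow> w \<le> n \<Longrightarrow>
      Comp C (arr_div (H w) (H v)) (arr_div (H v) (H u)) = arr_div (H w) (H u)"
  using cone by (simp_all add: arr_div_self comp_arr_div)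

lemma cone_simplex_in_nerve: "cone_simplex H n \<in> N n"
  unfolding cone_simplex_def using cone_functor by (rule simplex_of_in_nerve)

lemma edge_cone_simplex: "u \<le> v \<Longrightarrow> v \<le> n \<Longrightarrow> edge (cone_simplex H n) u v = arr_div (H v) (H u)"
  unfolding cone_simplex_def using cone_functor by (rule edge_simplex_of)

lemma vertex_cone_simplex: "u \<le> n \<Longrightarrow> vertex (cone_simplex H n) u = Cod C (H u)"
  unfolding cone_simplex_def using cone_functor by (rule vertex_simplex_of)

lemma face_cone_simplex:
  assumes n: "1 \<le> n" and i: "i \<le> n" and y: "y \<in> N (n - 1)" and r: "r \<le> n" "r \<noteq> i"
    and H_eq: "\<And>v. v \<le> n \<Longrightarrow> v \<noteq> i \<Longrightarrow> H v = vertex_arrow y (coface_inv i r) (coface_inv i v)"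
  shows "d i (cone_simplex H n) = y"
proof (rule nerve_simplex_eqI[OF face_in_nerve[OF cone_simplex_in_nerve n i] y])
  have r': "coface_inv i r \<le> n - 1" using coface_inv_le r i by simp
  have "vertex (d i (cone_simplex H n)) 0 = Cod C (H (coface i 0))"
    using vertex_face[OF cone_simplex_in_nerve n i, of 0] vertex_cone_simplex coface_le[of 0 n i] n
    by simp
  also have "\<dots> = vertex y 0"
    using H_eq[of "coface i 0"] vertex_arrow_arr[OF y r', of 0] coface_le[of 0 n i] n by simp
  finally show "vertex (d i (cone_simplex H n)) 0 = vertex y 0" .
  fix j assume j: "j < n - 1"
  have le: "coface i j \<le> coface i (Suc j)" "coface i (Suc j) \<le> n"
    using coface_mono[of j "Suc j" i] coface_le[of "Suc j" n i] j by auto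
  have "edge (d i (cone_simplex H n)) j (Suc j) = arr_div (H (coface i (Suc j))) (H (coface i j))"
    using edge_face[OF cone_simplex_in_nerve n i, of j "Suc j"] edge_cone_simplex le j by simp
  also have "\<dots> = arr_div (vertex_arrow y (coface_inv i r) (Suc j)) (vertex_arrow y (coface_inv i r) j)"
    using H_eq[of "coface i j"] H_eq[of "coface i (Suc j)"] le by simp
  also have "\<dots> = edge y j (Suc j)"
    using arr_div_vertex_arrow[OF y r', of j "Suc j"] vertex_arrow_edge[OF y, of j "Suc j"] j by simp
  finally show "edge (d i (cone_simplex H n)) j (Suc j) = edge y j (Suc j)" .
qed

end

lemma SS_filler:
  assumes n: "1 < n" and pq: "p < q" "q \<le> n" and cp: "cp \<in> N (n - 1)" and cq: "cq \<in> N (n - 1)"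
    and compatible: "d p cq = d (q - 1) cp"
  shows "\<exists>x\<in>N n. d p x = cp \<and> d q x = cq"
proof -
  have n1: "1 \<le> n - 1" using n by simp
  have common: "vertex_arrow cq (coface_inv q u) (coface_inv q v) =
      vertex_arrow cp (coface_inv p u) (coface_inv p v)"
    if uv: "u \<le> n" "v \<le> n" "u \<noteq> p" "u \<noteq> q" "v \<noteq> p" "v \<noteq> q" for u v
  proof -
    let ?u = "coface_inv p (coface_inv q u)" and ?v = "coface_inv p (coface_inv q v)"
    have idx: "coface_inv q u \<noteq> p" "coface_inv q v \<noteq> p" "coface (q - 1) ?u = coface_inv p u"
      "coface (q - 1) ?v = coface_inv p v" "?u \<le> n - 1 - 1" "?v \<le> n - 1 - 1"
      using uv pq by (auto simp: coface_inv_def coface_def)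
    have "vertex_arrow (d p cq) ?u ?v = vertex_arrow cq (coface_inv q u) (coface_inv q v)"
      using vertex_arrow_face[OF cq n1, of p ?u ?v] idx pq by (simp add: coface_coface_inv)
    moreover have "vertex_arrow (d (q - 1) cp) ?u ?v = vertex_arrow cp (coface_inv p u) (coface_inv p v)"
      using vertex_arrow_face[OF cp n1, of "q - 1" ?u ?v] idx pq by simp
    ultimately show ?thesis using compatible by simp
  qed
  \<comment> \<open>The filler is the cone at a vertex r outside {p, q}. Its legs are read off from cp,
    except the one to vertex p, which only cq sees; by \<open>common\<close> the legs also agree with cq.\<close>
  define r where "r = (if 0 < p then 0 else if 1 < q then 1 else (2::nat))"
  have r: "r \<le> n" "r \<noteq> p" "r \<noteq> q" using pq n by (auto simp: r_def)
  have r': "coface_inv p r \<le> n - 1" "coface_inv q r \<le> n - 1" using r pq coface_inv_le by auto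
  define H where "H v = (if v = p then vertex_arrow cq (coface_inv q r) (coface_inv q p)
    else vertex_arrow cp (coface_inv p r) (coface_inv p v))" for v
  have same_apex: "vertex cq (coface_inv q r) = vertex cp (coface_inv p r)"
    using common[of r r] r vertex_arrow_arr[OF cq, of "coface_inv q r"] vertex_arrow_arr[OF cp, of "coface_inv p r"] r'
    by metis
  have cone: "\<And>v. v \<le> n \<Longrightarrow> H v \<in> Arr C \<and> Dom C (H v) = vertex cp (coface_inv p r)"
    using vertex_arrow_arr[OF cq, of "coface_inv q r" "coface_inv q p"]
      vertex_arrow_arr[OF cp, of "coface_inv p r"]
      coface_inv_le[of p n q] coface_inv_le[of _ n p] same_apex r' pq
    by (auto simp: H_def)
  have "d p (cone_simplex H n) = cp"
    by (rule face_cone_simplex[where y = cp and r = r]) (use cone cp r n pq in \<open>auto simp: H_def\<close>)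
  moreover have "d q (cone_simplex H n) = cq"
    by (rule face_cone_simplex[where y = cq and r = r]) (use cone cq r n pq common[of r] in \<open>auto simp: H_def\<close>)
  moreover have "cone_simplex H n \<in> N n"
    by (rule cone_simplex_in_nerve) (use cone in auto)
  ultimately show ?thesis by blast
qed

lemma SS_complex_nerve: "SS_complex N d"
  unfolding SS_complex_def using SS_filler by auto


lemma face_vertex_arrow_eq:
  assumes z: "z \<in> N m" and z': "z' \<in> N m" and m: "1 \<le> m" and i: "i \<le> m" and eq: "d i z = d i z'"
    and uv: "u \<le> m" "v \<le> m" "u \<noteq> i" "v \<noteq> i"
  shows "vertex_arrow z u v = vertex_arrow z' u v"
proof -
  have "coface_inv i u \<le> m - 1" "coface_inv i v \<le> m - 1" using coface_inv_le uv i by auto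
  then have "vertex_arrow (d i z) (coface_inv i u) (coface_inv i v) = vertex_arrow z u v"
    and "vertex_arrow (d i z') (coface_inv i u) (coface_inv i v) = vertex_arrow z' u v"
    using vertex_arrow_face[OF z m i] vertex_arrow_face[OF z' m i] uv by (simp_all add: coface_coface_inv)
  then show ?thesis using eq by simp
qed

lemma nerve_simplex_eq_two_faces:
  assumes z: "z \<in> N m" and z': "z' \<in> N m" and m: "2 \<le> m" and st: "s < t" "t \<le> m"
    and eq_s: "d s z = d s z'" and eq_t: "d t z = d t z'"
  shows "z = z'"
proof -
  have agree: "vertex_arrow z a b = vertex_arrow z' a b"
    if "a \<le> m" "b \<le> m" "a \<noteq> s \<and> b \<noteq> s \<or> a \<noteq> t \<and> b \<noteq> t" for a b
    using that(3)
  proof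
    assume "a \<noteq> s \<and> b \<noteq> s"
    then show ?thesis using face_vertex_arrow_eq[OF z z' _ _ eq_s] that m st by simp
  next
    assume "a \<noteq> t \<and> b \<noteq> t"
    then show ?thesis using face_vertex_arrow_eq[OF z z' _ _ eq_t] that m st by simp
  qed
  \<comment> \<open>Every arrow between two vertices factors through a vertex r outside {s, t}, and each
    factor avoids s or t.\<close>
  define r where "r = (if s \<noteq> 0 then 0 else if t \<noteq> 1 then 1 else (2::nat))"
  have r: "r \<le> m" "r \<noteq> s" "r \<noteq> t" using m st by (auto simp: r_def)
  have all: "vertex_arrow z u v = vertex_arrow z' u v" if uv: "u \<le> m" "v \<le> m" for u v
  proof -
    have "vertex_arrow z u v = Comp C (vertex_arrow z r v) (vertex_arrow z u r)"
      using comp_vertex_arrow[OF z] uv r by simp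
    also have "\<dots> = Comp C (vertex_arrow z' r v) (vertex_arrow z' u r)"
      using agree[of r v] agree[of u r] uv r st by auto
    also have "\<dots> = vertex_arrow z' u v"
      using comp_vertex_arrow[OF z'] uv r by simp
    finally show ?thesis .
  qed
  show ?thesis
  proof (rule nerve_simplex_eqI[OF z z'])
    show "vertex z 0 = vertex z' 0"
      using all[of 0 0] vertex_arrow_arr[OF z, of 0 0] vertex_arrow_arr[OF z', of 0 0] by simp
    show "edge z j (Suc j) = edge z' j (Suc j)" if "j < m" for j
      using all[of j "Suc j"] vertex_arrow_edge[OF z, of j "Suc j"] vertex_arrow_edge[OF z', of j "Suc j"] that
      by simp
  qed
qed

lemma Kan_filler:
  assumes n: "1 \<le> n" and k: "k \<le> n"
    and y: "\<forall>i\<le>n. i \<noteq> k \<longrightarrow> y i \<in> N (n - 1)"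
    and compatible: "\<forall>i j. i < j \<and> j \<le> n \<and> i \<noteq> k \<and> j \<noteq> k \<longrightarrow> d i (y j) = d (j - 1) (y i)"
  shows "\<exists>x\<in>N n. \<forall>i\<le>n. i \<noteq> k \<longrightarrow> d i x = y i"
proof (cases "n = 1")
  case True
  then show ?thesis using Kan_filler_dim_1 k y by blast
next
  case False
  then have n2: "2 \<le> n" using n by simp
  define p where "p = (if k = 0 then 1 else (0::nat))"
  define q where "q = (if k \<le> 1 then 2 else (1::nat))"
  have pq: "p < q" "q \<le> n" "p \<noteq> k" "q \<noteq> k" using n2 by (auto simp: p_def q_def)
  obtain x where x: "x \<in> N n" "d p x = y p" "d q x = y q"
    using SS_filler[of n p q "y p" "y q"] n2 pq y compatible by auto
  have "d i x = y i" if i: "i \<le> n" "i \<noteq> k" "i \<noteq> p" "i \<noteq> q" for i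
  proof (rule nerve_simplex_eq_two_faces)
    show "d i x \<in> N (n - 1)" "y i \<in> N (n - 1)" using face_in_nerve[OF x(1)] y n i by auto
    show "2 \<le> n - 1" using i pq n2 k by (auto simp: p_def q_def split: if_splits)
    show "coface_inv i p < coface_inv i q" "coface_inv i q \<le> n - 1"
      using pq i by (auto simp: coface_inv_def)
    have "d (coface_inv i j) (d i x) = d (coface_inv i j) (y i)"
      if j: "j \<le> n" "j \<noteq> k" "j \<noteq> i" "d j x = y j" for j
    proof (cases "j < i")
      case True
      then show ?thesis
        using face_face[OF x(1) n2, of j i] compatible[rule_format, of j i] i j by (simp add: coface_inv_def)
    next
      case False
      then show ?thesis
        using face_face[OF x(1) n2, of i j] compatible[rule_format, of i j] i j by (simp add: coface_inv_def)
    qed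
    then show "d (coface_inv i p) (d i x) = d (coface_inv i p) (y i)"
      and "d (coface_inv i q) (d i x) = d (coface_inv i q) (y i)"
      using pq i x by auto
  qed
  then show ?thesis using x by metis
qed

lemma Kan_complex_nerve: "Kan_complex N d"
  unfolding Kan_complex_def using Kan_filler by blast

end

theorem mainTheorem5:
  fixes C :: "('o, 'm) category"
  assumes "is_category C"
  shows "SS_complex (nerve_simplices C) (nerve_face C) \<longleftrightarrow>
         Kan_complex (nerve_simplices C) (nerve_face C)"
proof -
  interpret small_category C by (rule small_category.intro) (fact assms)
  show ?thesis
    using SS_complex_outer_2_horn_filling Kan_complex_outer_2_horn_filling outer_2_horn_filling_groupoid
      groupoid.SS_complex_nerve groupoid.Kan_complex_nerve
    by blast
qed

end
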